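(* Let $\{\Psi^{(j)}\}_{j\ge0}$ be a sequence of Harris ergodic Markov chains, chain $j$ having transition function $K_j$ and invariant probability measure $\Pi_j$. Suppose that for each $j$ there are a function $V_j\ge0$, numbers $\lambda^{(j)}<1$, $L^{(j)}<\infty$, $\varepsilon^{(j)}>0$, $d^{(j)}>2L^{(j)}/(1-\lambda^{(j)})$ and a probability measure $Q_j$ with $\int V_j(x')K_j(x,dx')\le\lambda^{(j)}V_j(x)+L^{(j)}$ for all $x$ and $K_j(x,\cdot)\ge\varepsilon^{(j)}Q_j(\cdot)$ whenever $V_j(x)<d^{(j)}$, and let $\hat\rho^{(j)}=(1-\varepsilon^{(j)})^{r_j}\vee\Big(\frac{1+2L^{(j)}+\lambda^{(j)}d^{(j)}}{1+d^{(j)}}\Big)^{1-r_j}\{1+2(\lambda^{(j)}d^{(j)}+L^{(j)})\}^{r_j}$ for some $r_j\in(0,1)$ chosen so that $\hat\rho^{(j)}<1$. Suppose there is a subsequence $\{j_l\}$ along which at least one of the following holds: (i) $\lambda^{(j_l)}\to1$; (ii) $L^{(j_l)}\to\infty$, while $\varepsilon^{(j_l)}$ is bounded away from 1 and $\lambda^{(j_l)}$ is bounded away from 0; (iii) $\varepsilon^{(j_l)}\to0$. Then $\hat\rho^{(j_l)}\to1$. *)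

theory Defs
  imports "HOL-Probability.Probability"
begin

definition markov_kernel :: "'a measure \<Rightarrow> ('a \<Rightarrow> 'a measure) \<Rightarrow> bool" where
  "markov_kernel M K \<longleftrightarrow> K \<in> M \<rightarrow>\<^sub>M prob_algebra M"

definition invariant_prob :: "'a measure \<Rightarrow> ('a \<Rightarrow> 'a measure) \<Rightarrow> 'a measure \<Rightarrow> bool" where
  "invariant_prob M K P \<longleftrightarrow> prob_space P \<and> sets P = sets M \<and>
     (\<forall>A\<in>sets M. emeasure P A = (\<integral>\<^sup>+ x. emeasure (K x) A \<partial>P))"

text \<open>hit_prob K A n x = probability, starting from x, that the chain visits A at some
  time k with 1 \<le> k \<le> n.\<close>
fun hit_prob :: "('a \<Rightarrow> 'a measure) \<Rightarrow> 'a set \<Rightarrow> nat \<Rightarrow> 'a \<Rightarrow> ennreal" where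
  "hit_prob K A 0 x = 0"
| "hit_prob K A (Suc n) x =
     emeasure (K x) A + (\<integral>\<^sup>+ y. indicator (space (K x) - A) y * hit_prob K A n y \<partial>K x)"

text \<open>L(x,A) = P_x(tau_A < infinity), tau_A the first return time to A.\<close>
definition return_prob :: "('a \<Rightarrow> 'a measure) \<Rightarrow> 'a set \<Rightarrow> 'a \<Rightarrow> ennreal" where
  "return_prob K A x = (SUP n. hit_prob K A n x)"

text \<open>Harris recurrence: there is a nontrivial sigma-finite measure psi such that every
  set of positive psi-measure is reached with probability one from every starting point
  (this includes psi-irreducibility).\<close>
definition harris_recurrent :: "'a measure \<Rightarrow> ('a \<Rightarrow> 'a measure) \<Rightarrow> bool" where
  "harris_recurrent M K \<longleftrightarrow>
     (\<exists>\<psi>. sigma_finite_measure \<psi> \<and> sets \<psi> = sets M \<and> emeasure \<psi> (space M) > 0 \<and>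
        (\<forall>A\<in>sets M. emeasure \<psi> A > 0 \<longrightarrow> (\<forall>x\<in>space M. return_prob K A x = 1)))"

text \<open>Aperiodicity (Roberts--Rosenthal): no cyclic decomposition of period d \<ge> 2.\<close>
definition aperiodic :: "'a measure \<Rightarrow> ('a \<Rightarrow> 'a measure) \<Rightarrow> 'a measure \<Rightarrow> bool" where
  "aperiodic M K P \<longleftrightarrow>
     \<not> (\<exists>d::nat. d \<ge> 2 \<and> (\<exists>D::nat \<Rightarrow> 'a set.
          (\<forall>i<d. D i \<in> sets M) \<and> disjoint_family_on D {..<d} \<and> emeasure P (D 0) > 0 \<and>
          (\<forall>i<d. \<forall>x\<in>D i. measure (K x) (D (Suc i mod d)) = 1)))"

text \<open>Harris ergodic: Markov kernel with an invariant probability measure, Harris recurrent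
  (hence positive Harris recurrent) and aperiodic.\<close>
definition harris_ergodic :: "'a measure \<Rightarrow> ('a \<Rightarrow> 'a measure) \<Rightarrow> 'a measure \<Rightarrow> bool" where
  "harris_ergodic M K P \<longleftrightarrow>
     markov_kernel M K \<and> invariant_prob M K P \<and> harris_recurrent M K \<and> aperiodic M K P"

definition rho_hat :: "real \<Rightarrow> real \<Rightarrow> real \<Rightarrow> real \<Rightarrow> real \<Rightarrow> real" where
  "rho_hat \<epsilon> lam L d r =
     max ((1 - \<epsilon>) powr r)
         (((1 + 2 * L + lam * d) / (1 + d)) powr (1 - r) * (1 + 2 * (lam * d + L)) powr r)"

end

theory Submission
  imports Defs
begin

text \<open>The bound is at least \<open>1 - eps\<close> (its first term is \<open>(1 - eps) powr r\<close>) and at least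
  \<open>lam powr (1 - r) * (1 + 2 L) powr r\<close> (its second term, as \<open>(1 + 2 L + lam d)/(1 + d) \<ge> lam\<close>).
  These lower bounds tend to 1 when \<open>lam \<rightarrow> 1\<close>, respectively \<open>eps \<rightarrow> 0\<close>. When \<open>L \<rightarrow> \<infinity>\<close>
  with \<open>lam \<ge> c > 0\<close>, the constraint \<open>rho_hat < 1\<close> forces \<open>c (1 + 2 L) powr r < 1\<close>, hence
  \<open>r \<le> -ln c / ln (1 + 2 L) \<rightarrow> 0\<close>, and then \<open>(1 - eps) powr r \<ge> (1 - c') powr r \<rightarrow> 1\<close> for
  \<open>eps \<le> c' < 1\<close>. As \<open>rho_hat < 1\<close>, it is squeezed to 1 in each case.\<close>

lemma harris_recurrent_space_nonempty:
  assumes "harris_recurrent M K"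
  shows "space M \<noteq> {}"
proof
  assume "space M = {}"
  moreover obtain \<psi> where "sets \<psi> = sets M" "emeasure \<psi> (space M) > 0"
    using assms unfolding harris_recurrent_def by auto
  ultimately show False by simp
qed

lemma markov_kernel_prob_space:
  assumes "markov_kernel M K" "x \<in> space M"
  shows "prob_space (K x)" and "space (K x) = space M"
proof -
  have "K x \<in> space (prob_algebra M)"
    using assms unfolding markov_kernel_def by (rule measurable_space)
  then have "prob_space (K x)" and sets_eq: "sets (K x) = sets M"
    by (auto simp: space_prob_algebra)
  then show "prob_space (K x)" and "space (K x) = space M"
    using sets_eq_imp_space_eq[OF sets_eq] by auto
qed

lemma drift_constant_nonneg:
  fixes V :: "'a \<Rightarrow> real"
  assumes "S \<noteq> {}" and V_nonneg: "\<And>x. x \<in> S \<Longrightarrow> 0 \<le> V x" and "lam < 1"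
    and below_drift: "\<And>x. x \<in> S \<Longrightarrow> Inf (V ` S) \<le> lam * V x + L"
  shows "0 \<le> L"
proof -
  define m where "m = Inf (V ` S)"
  have m_nonneg: "0 \<le> m"
    unfolding m_def using assms(1) V_nonneg by (auto intro!: cINF_greatest)
  show ?thesis
  proof (cases "lam \<le> 0")
    case True
    obtain x where "x \<in> S" using assms(1) by auto
    with True V_nonneg below_drift have "m \<le> L"
      unfolding m_def by (smt (verit) mult_nonpos_nonneg)
    with m_nonneg show ?thesis by linarith
  next
    case False
    have "(m - L) / lam \<le> V x" if "x \<in> S" for x
      using below_drift[OF that] False by (simp add: m_def pos_divide_le_eq mult.commute)
    then have "(m - L) / lam \<le> m"
      unfolding m_def using assms(1) by (auto intro!: cINF_greatest)
    with False have "(1 - lam) * m \<le> L" by (simp add: pos_divide_le_eq algebra_simps)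
    moreover have "0 \<le> (1 - lam) * m" using m_nonneg \<open>lam < 1\<close> by simp
    ultimately show ?thesis by linarith
  qed
qed

lemma harris_ergodic_drift_constant_nonneg:
  fixes V :: "'a \<Rightarrow> real"
  assumes erg: "harris_ergodic M K P"
    and V_nonneg: "\<And>x. x \<in> space M \<Longrightarrow> 0 \<le> V x" and "lam < 1"
    and drift: "\<And>x. x \<in> space M \<Longrightarrow>
                  integrable (K x) V \<and> (\<integral>y. V y \<partial>(K x)) \<le> lam * V x + L"
  shows "0 \<le> L"
proof (rule drift_constant_nonneg[OF _ V_nonneg \<open>lam < 1\<close>])
  show "space M \<noteq> {}"
    using erg unfolding harris_ergodic_def by (auto dest: harris_recurrent_space_nonempty)
  fix x assume x: "x \<in> space M"
  have kernel: "markov_kernel M K" using erg unfolding harris_ergodic_def by simp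
  have "bdd_below (V ` space M)" using V_nonneg by (rule bdd_belowI2)
  then have "Inf (V ` space M) \<le> (\<integral>y. V y \<partial>(K x))"
    using drift[OF x] markov_kernel_prob_space[OF kernel x]
    by (intro prob_space.integral_ge_const) (auto intro!: cInf_lower)
  with drift[OF x] show "Inf (V ` space M) \<le> lam * V x + L" by linarith
qed

lemma le_powr_of_le_one:
  fixes x r :: real
  assumes "0 \<le> x" "x \<le> 1" "r \<le> 1"
  shows "x \<le> x powr r"
  using powr_mono'[OF assms(3,1,2)] assms(1) by simp

lemma rho_hat_ge_one_minus_eps_powr:
  assumes "eps \<le> c" "c \<le> 1" "0 \<le> r"
  shows "(1 - c) powr r \<le> rho_hat eps lam L d r"
  using powr_mono2[of r "1 - c" "1 - eps"] assms unfolding rho_hat_def by simp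

lemma rho_hat_ge_lam_powr:
  assumes "0 \<le> lam" "lam \<le> 1" "0 \<le> L" "0 < d" "0 \<le> r" "r \<le> 1"
  shows "lam powr (1 - r) * (1 + 2 * L) powr r \<le> rho_hat eps lam L d r"
proof -
  have "lam * (1 + d) \<le> 1 + 2 * L + lam * d"
    using assms by (simp add: distrib_left)
  then have "lam powr (1 - r) \<le> ((1 + 2 * L + lam * d) / (1 + d)) powr (1 - r)"
    using assms by (intro powr_mono2) (auto simp: pos_le_divide_eq)
  moreover have "(1 + 2 * L) powr r \<le> (1 + 2 * (lam * d + L)) powr r"
    using assms by (intro powr_mono2) auto
  ultimately show ?thesis
    unfolding rho_hat_def by (intro max.coboundedI2 mult_mono) auto
qed

lemma rho_hat_ge_lam:
  assumes "0 \<le> lam" "lam \<le> 1" "0 \<le> L" "0 < d" "0 \<le> r" "r \<le> 1"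
  shows "lam \<le> rho_hat eps lam L d r"
proof -
  have "lam \<le> lam powr (1 - r)"
    using assms by (intro le_powr_of_le_one) auto
  also have "\<dots> \<le> lam powr (1 - r) * (1 + 2 * L) powr r"
    using assms ge_one_powr_ge_zero[of "1 + 2 * L" r] by (intro mult_le_cancel_left1[THEN iffD2]) auto
  also have "\<dots> \<le> rho_hat eps lam L d r"
    using assms by (rule rho_hat_ge_lam_powr)
  finally show ?thesis .
qed

lemma rho_hat_lt_one_exponent_le:
  assumes "0 < c" "c \<le> lam" "lam \<le> 1" "0 < L" "0 < d" "0 \<le> r" "r \<le> 1"
    and "rho_hat eps lam L d r < 1"
  shows "r \<le> - ln c / ln (1 + 2 * L)"
proof -
  have "c \<le> lam powr (1 - r)"
    using assms le_powr_of_le_one[of lam "1 - r"] by linarith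
  then have "c * (1 + 2 * L) powr r \<le> lam powr (1 - r) * (1 + 2 * L) powr r"
    by (intro mult_right_mono) auto
  also have "\<dots> < 1"
    using rho_hat_ge_lam_powr[of lam L d r eps] assms by linarith
  finally have "(1 + 2 * L) powr r < 1 / c"
    using assms by (simp add: pos_less_divide_eq mult.commute)
  then have "ln ((1 + 2 * L) powr r) < ln (1 / c)"
    using assms by (subst ln_less_cancel_iff) auto
  then have "r * ln (1 + 2 * L) < - ln c"
    using assms by (simp add: ln_powr ln_div)
  moreover have "0 < ln (1 + 2 * L)"
    using assms by simp
  ultimately show ?thesis
    by (simp add: divide_simps mult.commute)
qed

definition rate_params :: "real \<Rightarrow> real \<Rightarrow> real \<Rightarrow> real \<Rightarrow> real \<Rightarrow> bool" where
  "rate_params eps lam L d r \<longleftrightarrow>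
     0 < eps \<and> lam < 1 \<and> 0 \<le> L \<and> 0 < d \<and> 0 < r \<and> r < 1 \<and> rho_hat eps lam L d r < 1"

lemma rho_hat_tendsto_one_squeeze:
  assumes "\<And>l. rate_params (eps l) (lam l) (L l) (d l) (r l)"
    and "eventually (\<lambda>l. f l \<le> rho_hat (eps l) (lam l) (L l) (d l) (r l)) sequentially"
    and "f \<longlonglongrightarrow> 1"
  shows "(\<lambda>l. rho_hat (eps l) (lam l) (L l) (d l) (r l)) \<longlonglongrightarrow> 1"
  using assms(1) unfolding rate_params_def
  by (intro tendsto_sandwich[OF assms(2) _ assms(3) tendsto_const] always_eventually allI)
    (auto intro: less_imp_le)

lemma rho_hat_tendsto_one_if_lam_tendsto_one:
  assumes params: "\<And>l. rate_params (eps l) (lam l) (L l) (d l) (r l)"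
    and lim: "lam \<longlonglongrightarrow> 1"
  shows "(\<lambda>l. rho_hat (eps l) (lam l) (L l) (d l) (r l)) \<longlonglongrightarrow> 1"
proof (rule rho_hat_tendsto_one_squeeze[OF params _ lim])
  show "eventually (\<lambda>l. lam l \<le> rho_hat (eps l) (lam l) (L l) (d l) (r l)) sequentially"
    using order_tendstoD(1)[OF lim zero_less_one]
  proof eventually_elim
    case (elim l)
    with params[of l] show ?case by (intro rho_hat_ge_lam) (auto simp: rate_params_def)
  qed
qed

lemma rho_hat_tendsto_one_if_eps_tendsto_zero:
  assumes params: "\<And>l. rate_params (eps l) (lam l) (L l) (d l) (r l)"
    and lim: "eps \<longlonglongrightarrow> 0"
  shows "(\<lambda>l. rho_hat (eps l) (lam l) (L l) (d l) (r l)) \<longlonglongrightarrow> 1"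
proof (rule rho_hat_tendsto_one_squeeze[OF params])
  show "(\<lambda>l. 1 - eps l) \<longlonglongrightarrow> 1"
    using tendsto_diff[OF tendsto_const lim, of 1] by simp
  show "eventually (\<lambda>l. 1 - eps l \<le> rho_hat (eps l) (lam l) (L l) (d l) (r l)) sequentially"
    using order_tendstoD(2)[OF lim zero_less_one]
  proof eventually_elim
    case (elim l)
    with params[of l] have "1 - eps l \<le> (1 - eps l) powr r l"
      by (intro le_powr_of_le_one) (auto simp: rate_params_def)
    also have "\<dots> \<le> rho_hat (eps l) (lam l) (L l) (d l) (r l)"
      using params[of l] elim by (intro rho_hat_ge_one_minus_eps_powr) (auto simp: rate_params_def)
    finally show ?case .
  qed
qed

lemma rho_hat_tendsto_one_if_L_tendsto_infinity:
  assumes params: "\<And>l. rate_params (eps l) (lam l) (L l) (d l) (r l)"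
    and Ltop: "filterlim L at_top sequentially"
    and eps_le: "\<And>l. eps l \<le> c'" and "c' < 1"
    and lam_ge: "\<And>l. c \<le> lam l" and "0 < c"
  shows "(\<lambda>l. rho_hat (eps l) (lam l) (L l) (d l) (r l)) \<longlonglongrightarrow> 1"
proof (rule rho_hat_tendsto_one_squeeze[OF params])
  have r_nonneg: "0 \<le> r l" for l
    using params[of l] by (simp add: rate_params_def)
  have "filterlim (\<lambda>l. ln (1 + 2 * L l)) at_top sequentially"
    by (intro filterlim_compose[OF ln_at_top] filterlim_tendsto_add_at_top[OF tendsto_const]
        filterlim_tendsto_pos_mult_at_top[OF tendsto_const _ Ltop]) simp
  then have bound_lim: "(\<lambda>l. - ln c / ln (1 + 2 * L l)) \<longlonglongrightarrow> 0"
    by (intro tendsto_divide_0[OF tendsto_const] filterlim_at_top_imp_at_infinity)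
  have "eventually (\<lambda>l. r l \<le> - ln c / ln (1 + 2 * L l)) sequentially"
    using Ltop[unfolded filterlim_at_top_dense, rule_format, of 0]
  proof eventually_elim
    case (elim l)
    with params[of l] lam_ge[of l] \<open>0 < c\<close> show ?case
      by (intro rho_hat_lt_one_exponent_le[where eps = "eps l" and d = "d l"])
        (auto simp: rate_params_def)
  qed
  moreover have "eventually (\<lambda>l. 0 \<le> r l) sequentially"
    using r_nonneg by simp
  ultimately have "r \<longlonglongrightarrow> 0"
    by (intro tendsto_sandwich[OF _ _ tendsto_const bound_lim])
  then have "(\<lambda>l. (1 - c') powr r l) \<longlonglongrightarrow> (1 - c') powr 0"
    using \<open>c' < 1\<close> by (intro tendsto_powr tendsto_const) auto
  then show "(\<lambda>l. (1 - c') powr r l) \<longlonglongrightarrow> 1"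
    using \<open>c' < 1\<close> by simp
  show "eventually (\<lambda>l. (1 - c') powr r l \<le> rho_hat (eps l) (lam l) (L l) (d l) (r l)) sequentially"
    using eps_le \<open>c' < 1\<close> r_nonneg
    by (intro always_eventually allI rho_hat_ge_one_minus_eps_powr) auto
qed

theorem proposition1:
  fixes M :: "nat \<Rightarrow> 'a measure"
    and K :: "nat \<Rightarrow> 'a \<Rightarrow> 'a measure"
    and Pinv :: "nat \<Rightarrow> 'a measure"
    and Q :: "nat \<Rightarrow> 'a measure"
    and V :: "nat \<Rightarrow> 'a \<Rightarrow> real"
    and lam L eps d r :: "nat \<Rightarrow> real"
    and js :: "nat \<Rightarrow> nat"
  assumes erg: "\<And>j. harris_ergodic (M j) (K j) (Pinv j)"
    and V_meas: "\<And>j. V j \<in> borel_measurable (M j)"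
    and V_nonneg: "\<And>j x. x \<in> space (M j) \<Longrightarrow> V j x \<ge> 0"
    and lam_lt: "\<And>j. lam j < 1"
    and eps_pos: "\<And>j. eps j > 0"
    and d_gt: "\<And>j. d j > 2 * L j / (1 - lam j)"
    and Q_prob: "\<And>j. prob_space (Q j)" and Q_sets: "\<And>j. sets (Q j) = sets (M j)"
    and drift: "\<And>j x. x \<in> space (M j) \<Longrightarrow>
                  integrable (K j x) (V j) \<and>
                  (\<integral>y. V j y \<partial>(K j x)) \<le> lam j * V j x + L j"
    and minor: "\<And>j x A. x \<in> space (M j) \<Longrightarrow> V j x < d j \<Longrightarrow> A \<in> sets (M j) \<Longrightarrow>
                  measure (K j x) A \<ge> eps j * measure (Q j) A"
    and r_range: "\<And>j. 0 < r j \<and> r j < 1"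
    and rho_lt: "\<And>j. rho_hat (eps j) (lam j) (L j) (d j) (r j) < 1"
    and subseq: "strict_mono js"
    and cases:
      "((\<lambda>l. lam (js l)) \<longlonglongrightarrow> 1) \<or>
       (filterlim (\<lambda>l. L (js l)) at_top sequentially \<and>
          (\<exists>c<1. \<forall>l. eps (js l) \<le> c) \<and> (\<exists>c>0. \<forall>l. lam (js l) \<ge> c)) \<or>
       ((\<lambda>l. eps (js l)) \<longlonglongrightarrow> 0)"
  shows "(\<lambda>l. rho_hat (eps (js l)) (lam (js l)) (L (js l)) (d (js l)) (r (js l))) \<longlonglongrightarrow> 1"
proof -
  have "rate_params (eps j) (lam j) (L j) (d j) (r j)" for j
  proof -
    have "0 \<le> L j"
      using harris_ergodic_drift_constant_nonneg[OF erg V_nonneg lam_lt drift] .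
    with lam_lt[of j] d_gt[of j] have "0 < d j"
      by (smt (verit) divide_nonneg_pos)
    with \<open>0 \<le> L j\<close> show ?thesis
      using eps_pos lam_lt r_range rho_lt by (simp add: rate_params_def)
  qed
  then have params: "\<And>l. rate_params (eps (js l)) (lam (js l)) (L (js l)) (d (js l)) (r (js l))" .
  from cases show ?thesis
  proof (elim disjE conjE exE)
    assume "(\<lambda>l. lam (js l)) \<longlonglongrightarrow> 1"
    then show ?thesis by (rule rho_hat_tendsto_one_if_lam_tendsto_one[OF params])
  next
    fix c' c
    assume "filterlim (\<lambda>l. L (js l)) at_top sequentially"
      "c' < 1" "\<forall>l. eps (js l) \<le> c'" "0 < c" "\<forall>l. c \<le> lam (js l)"
    then show ?thesis by (intro rho_hat_tendsto_one_if_L_tendsto_infinity[OF params]) auto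
  next
    assume "(\<lambda>l. eps (js l)) \<longlonglongrightarrow> 0"
    then show ?thesis by (rule rho_hat_tendsto_one_if_eps_tendsto_zero[OF params])
  qed
qed

end
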